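(* Let $L_1=U\oplus A_2$ with $\mathbb{Z}$-basis $e_1,\dots,e_4$ and Gram matrix $$\begin{pmatrix}0&1&0&0\\1&0&0&0\\0&0&-2&-1\\0&0&-1&-2\end{pmatrix}.$$ Let $v_1=(1,-1,0,0)$, $v_2=(0,0,-1,0)$, $v_3=(0,0,0,1)$, $v_4=(0,1,1,-1)$ (coordinates in this basis). Then $\operatorname{O}^+(L_1)$ is generated by the reflections $\sigma_{v_1},\sigma_{v_2},\sigma_{v_3},\sigma_{v_4}$ together with the isometry $(x_1,x_2,x_3,x_4)\mapsto(x_1,x_2,-x_4,-x_3)$.
   Context: For a non-isotropic vector $w$, $\sigma_w(x)=x-\frac{2(x,w)}{(w,w)}w$. The real spinor norm of $g=\sigma_{w_1}\cdots\sigma_{w_m}\in\operatorname{O}(L_1\otimes\mathbb{R})$ is $\prod_i(-(w_i,w_i)/2)\in\mathbb{R}^*/(\mathbb{R}^* )^2$, and $\operatorname{O}^+(L_1)$ is the subgroup of $\operatorname{O}(L_1)$ of elements with real spinor norm $1$ (for this Lorentzian lattice, equivalently those preserving each component of the cone of positive vectors). *)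

theory Defs
  imports "HOL-Analysis.Analysis"
begin

text \<open>The lattice L1 = U + A2 is Z^4 (type int^4) with the Gram matrix of the paper;
the same formula defines the bilinear form on L1 (x) R = R^4.\<close>

definition bil :: "'a::comm_ring_1 ^ 4 \<Rightarrow> 'a ^ 4 \<Rightarrow> 'a" where
  "bil x y = x$1 * y$2 + x$2 * y$1 - 2 * x$3 * y$3 - x$3 * y$4 - x$4 * y$3 - 2 * x$4 * y$4"

definition vec4 :: "'a \<Rightarrow> 'a \<Rightarrow> 'a \<Rightarrow> 'a \<Rightarrow> 'a ^ 4" where
  "vec4 a b c d = (\<chi> i. if i = 1 then a else if i = 2 then b else if i = 3 then c else d)"

definition O_L1 :: "(int ^ 4 \<Rightarrow> int ^ 4) set" where
  "O_L1 = {g. bij g \<and> (\<forall>x y. g (x + y) = g x + g y) \<and> (\<forall>x y. bil (g x) (g y) = bil x y)}"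

definition reflR :: "real ^ 4 \<Rightarrow> real ^ 4 \<Rightarrow> real ^ 4" where
  "reflR w x = x - (2 * bil x w / bil w w) *s w"

definition realext :: "(int ^ 4 \<Rightarrow> int ^ 4) \<Rightarrow> real ^ 4 \<Rightarrow> real ^ 4" where
  "realext g x = (\<Sum>i\<in>UNIV. x$i *s (\<chi> j. real_of_int (g (axis i 1) $ j)))"

text \<open>Real spinor norm 1: g = sigma_{w1} ... sigma_{wm} over R with
  prod (-(w_i,w_i)/2) a positive real (i.e. trivial in R^*/(R^*)^2).\<close>
definition spinor_norm_one :: "(int ^ 4 \<Rightarrow> int ^ 4) \<Rightarrow> bool" where
  "spinor_norm_one g \<longleftrightarrow> (\<exists>ws. (\<forall>w\<in>set ws. bil w w \<noteq> 0)
      \<and> realext g = foldr (\<lambda>w f. reflR w \<circ> f) ws id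
      \<and> (\<Prod>w\<leftarrow>ws. - bil w w / 2) > 0)"

definition O_plus_L1 :: "(int ^ 4 \<Rightarrow> int ^ 4) set" where
  "O_plus_L1 = {g \<in> O_L1. spinor_norm_one g}"

text \<open>Reflection sigma_w on L1 for a vector w of L1 with (w,w) dividing 2(x,w) for all x
  (true for the v_i below, which have norm -2); the division is then exact.\<close>
definition refl_int :: "int ^ 4 \<Rightarrow> int ^ 4 \<Rightarrow> int ^ 4" where
  "refl_int w x = x - ((2 * bil x w) div (bil w w)) *s w"

inductive_set gen_group :: "('a \<Rightarrow> 'a) set \<Rightarrow> ('a \<Rightarrow> 'a) set" for S where
  gen_id: "id \<in> gen_group S"
| gen_base: "g \<in> S \<Longrightarrow> g \<in> gen_group S"
| gen_comp: "f \<in> gen_group S \<Longrightarrow> g \<in> gen_group S \<Longrightarrow> f \<circ> g \<in> gen_group S"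
| gen_inv: "f \<in> gen_group S \<Longrightarrow> inv f \<in> gen_group S"

definition v1 :: "int ^ 4" where "v1 = vec4 1 (-1) 0 0"
definition v2 :: "int ^ 4" where "v2 = vec4 0 0 (-1) 0"
definition v3 :: "int ^ 4" where "v3 = vec4 0 0 0 1"
definition v4 :: "int ^ 4" where "v4 = vec4 0 1 1 (-1)"

definition swap_iso :: "int ^ 4 \<Rightarrow> int ^ 4" where
  "swap_iso x = vec4 (x$1) (x$2) (- x$4) (- x$3)"

end

theory Submission
  imports Defs
begin

text \<open>The vector \<open>\<rho> = (3, 4, 1, -1)\<close> is a Weyl vector for the simple roots: it has norm 22
  and \<open>(\<rho>, v\<^sub>i) = 1\<close> for all \<open>i\<close>. A real reflection in a vector of negative norm preserves
  each sheet of the cone of positive vectors and one in a vector of positive norm exchanges them, so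
  elements of real spinor norm 1 keep \<open>\<rho>\<close> in its sheet. Given such a \<open>g\<close>, put \<open>y = g \<rho>\<close>;
  every root \<open>r\<close> has \<open>(r, \<rho>) \<noteq> 0\<close>, so either all \<open>(y, v\<^sub>i) \<ge> 1\<close>, which forces
  \<open>y = \<rho>\<close>, or reflecting in some \<open>v\<^sub>i\<close> with \<open>(y, v\<^sub>i) < 0\<close> decreases the positive integer
  \<open>(y, \<rho>)\<close>. Finally the stabiliser of \<open>\<rho>\<close> permutes the simple roots (the roots \<open>r\<close> with
  \<open>(r, \<rho>) = 1\<close>) preserving their Gram matrix, so it consists of the identity and the swap.\<close>

lemma vec4_nth [simp]:
  "vec4 a b c d $ 1 = a" "vec4 a b c d $ 2 = b" "vec4 a b c d $ 3 = c" "vec4 a b c d $ 4 = d"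
  by (simp_all add: vec4_def)

lemma vec4_eq_iff: "(x :: 'a ^ 4) = y \<longleftrightarrow> x$1 = y$1 \<and> x$2 = y$2 \<and> x$3 = y$3 \<and> x$4 = y$4"
  by (auto simp: vec_eq_iff forall_4)

lemma bil_sym: "bil x y = bil y x"
  by (simp add: bil_def algebra_simps)

lemma bil_add_left: "bil (x + y) z = bil x z + bil y z"
  and bil_add_right: "bil z (x + y) = bil z x + bil z y"
  and bil_diff_left: "bil (x - y) z = bil x z - bil y z"
  and bil_diff_right: "bil z (x - y) = bil z x - bil z y"
  and bil_minus_left: "bil (- x) z = - bil x z"
  and bil_minus_right: "bil z (- x) = - bil z x"
  and bil_scale_left: "bil (c *s x) z = c * bil x z"
  and bil_scale_right: "bil z (c *s x) = c * bil z x"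
  by (simp_all add: bil_def algebra_simps)

lemmas bil_linear = bil_add_left bil_add_right bil_diff_left bil_diff_right
  bil_minus_left bil_minus_right bil_scale_left bil_scale_right

lemma bil_self: "bil x x = 2 * (x$1 * x$2 - (x$3 * x$3 + x$3 * x$4 + x$4 * x$4))"
  by (simp add: bil_def algebra_simps)

lemma additive_scale_int:
  fixes g :: "int ^ 'n \<Rightarrow> int ^ 'm"
  assumes "Modules.additive g"
  shows "g (k *s x) = k *s g x"
proof -
  have nat: "g (of_nat n *s x) = of_nat n *s g x" for n
    by (induction n) (simp_all add: additive.zero[OF assms] additive.add[OF assms] vector_sadd_rdistrib)
  show ?thesis
  proof (cases "k \<ge> 0")
    case True
    then show ?thesis using nat[of "nat k"] by simp
  next
    case False
    define n where "n = nat (- k)"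
    then have k: "k = - of_nat n" using False by simp
    have neg: "(- of_nat n) *s y = - (of_nat n *s y)" for y :: "int ^ 'l"
      by (simp add: vec_eq_iff)
    show ?thesis by (simp add: k neg additive.minus[OF assms] nat)
  qed
qed

lemma additive_basis_expansion:
  fixes g :: "int ^ 'n \<Rightarrow> int ^ 'm"
  assumes "Modules.additive g"
  shows "g x = (\<Sum>i\<in>UNIV. x$i *s g (axis i 1))"
proof -
  have "g x = g (\<Sum>i\<in>UNIV. x$i *s axis i 1)" by (simp add: basis_expansion)
  also have "\<dots> = (\<Sum>i\<in>UNIV. x$i *s g (axis i 1))"
    by (simp add: additive.sum[OF assms] additive_scale_int[OF assms])
  finally show ?thesis .
qed

lemma additive_nth:
  fixes g :: "int ^ 'n \<Rightarrow> int ^ 'm"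
  assumes "Modules.additive g"
  shows "g y $ k = (\<Sum>i\<in>UNIV. y$i * g (axis i 1) $ k)"
  by (subst additive_basis_expansion[OF assms]) (simp add: sum_component)

definition real_vec :: "int ^ 4 \<Rightarrow> real ^ 4" where
  "real_vec x = (\<chi> i. real_of_int (x$i))"

lemma real_vec_nth [simp]: "real_vec x $ i = real_of_int (x$i)"
  by (simp add: real_vec_def)

lemma real_vec_axis: "real_vec (axis i 1) = axis i 1"
  by (simp add: vec_eq_iff axis_def)

lemma real_vec_add_scale: "real_vec (x + c *s y) = real_vec x + of_int c *s real_vec y"
  by (simp add: vec_eq_iff)

lemma bil_real_vec: "bil (real_vec x) (real_vec y) = real_of_int (bil x y)"
  by (simp add: bil_def)

lemma realext_nth: "realext g x $ k = (\<Sum>i\<in>UNIV. x$i * real_of_int (g (axis i 1) $ k))"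
  by (simp add: realext_def sum_component)

lemma realext_real_vec: "Modules.additive g \<Longrightarrow> realext g (real_vec y) = real_vec (g y)"
  by (simp add: vec_eq_iff realext_nth additive_nth[of g y])

lemma realext_comp:
  assumes "Modules.additive f"
  shows "realext (f \<circ> g) = realext f \<circ> realext g"
proof (rule ext, subst vec_eq_iff, intro allI)
  fix x k
  let ?G = "\<lambda>i j. real_of_int (g (axis i 1) $ j)" and ?F = "\<lambda>j. real_of_int (f (axis j 1) $ k)"
  have "realext (f \<circ> g) x $ k = (\<Sum>i\<in>UNIV. \<Sum>j\<in>UNIV. x$i * ?G i j * ?F j)"
    by (simp add: realext_nth additive_nth[OF assms, of "g _"] sum_distrib_left mult.assoc)
  also have "\<dots> = (\<Sum>j\<in>UNIV. (\<Sum>i\<in>UNIV. x$i * ?G i j) * ?F j)"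
    by (subst sum.swap) (simp add: sum_distrib_right)
  also have "\<dots> = (realext f \<circ> realext g) x $ k"
    by (simp add: realext_nth)
  finally show "realext (f \<circ> g) x $ k = (realext f \<circ> realext g) x $ k" .
qed

lemma realext_eq_linear:
  fixes f :: "real ^ 4 \<Rightarrow> real ^ 4"
  assumes "linear f" "\<And>i. f (axis i 1) = real_vec (g (axis i 1))"
  shows "realext g = f"
proof
  fix x
  have "f x = f (\<Sum>i\<in>UNIV. x$i *\<^sub>R axis i 1)"
    by (simp add: basis_expansion scalar_mult_eq_scaleR[symmetric])
  also have "\<dots> = (\<Sum>i\<in>UNIV. x$i *s real_vec (g (axis i 1)))"
    by (simp add: linear_sum[OF assms(1)] linear_scale[OF assms(1)] assms(2) scalar_mult_eq_scaleR)
  finally show "realext g x = f x"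
    by (simp add: realext_def real_vec_def)
qed

lemma realext_id: "realext id = id"
  by (rule realext_eq_linear[OF linear_id]) (simp add: real_vec_axis)

lemma linear_reflR: "linear (reflR w)"
  by (rule linearI)
    (simp_all add: reflR_def bil_linear scalar_mult_eq_scaleR[symmetric] vec_eq_iff algebra_simps
      add_divide_distrib)

lemma reflR_reflR:
  assumes "bil w w \<noteq> 0"
  shows "reflR w (reflR w x) = x"
proof -
  have "bil (reflR w x) w = - bil x w" using assms by (simp add: reflR_def bil_linear)
  then show ?thesis by (simp add: reflR_def[of w "reflR w x"]) (simp add: reflR_def vec_eq_iff)
qed

lemma bil_reflR:
  assumes "bil w w \<noteq> 0"
  shows "bil (reflR w x) (reflR w y) = bil x y"
  using assms by (simp add: reflR_def bil_linear bil_sym[of w y] field_simps)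

definition refl_prod :: "(real ^ 4) list \<Rightarrow> real ^ 4 \<Rightarrow> real ^ 4" where
  "refl_prod ws = foldr (\<lambda>w f. reflR w \<circ> f) ws id"

lemma refl_prod_simps [simp]:
  "refl_prod [] = id" "refl_prod (w # ws) = reflR w \<circ> refl_prod ws"
  by (simp_all add: refl_prod_def)

lemma refl_prod_append: "refl_prod (ws @ vs) = refl_prod ws \<circ> refl_prod vs"
  by (induction ws) (simp_all add: o_assoc)

lemma refl_prod_rev:
  assumes "\<forall>w\<in>set ws. bil w w \<noteq> 0"
  shows "refl_prod (rev ws) \<circ> refl_prod ws = id"
  using assms by (induction ws) (simp_all add: refl_prod_append fun_eq_iff reflR_reflR)

lemma bil_refl_prod:
  assumes "\<forall>w\<in>set ws. bil w w \<noteq> 0"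
  shows "bil (refl_prod ws x) (refl_prod ws y) = bil x y"
  using assms by (induction ws) (simp_all add: bil_reflR)

lemma spinor_norm_one_iff:
  "spinor_norm_one g \<longleftrightarrow> (\<exists>ws. (\<forall>w\<in>set ws. bil w w \<noteq> 0) \<and> realext g = refl_prod ws
      \<and> (\<Prod>w\<leftarrow>ws. - bil w w / 2) > 0)"
  by (simp add: spinor_norm_one_def refl_prod_def)

lemma spinor_norm_one_reflR:
  assumes "realext g = reflR w" "bil w w < 0"
  shows "spinor_norm_one g"
  unfolding spinor_norm_one_iff using assms by (intro exI[of _ "[w]"]) simp

lemma spinor_norm_one_comp:
  assumes "Modules.additive f" "spinor_norm_one f" "spinor_norm_one g"
  shows "spinor_norm_one (f \<circ> g)"
proof -
  obtain ws vs where ws: "\<forall>w\<in>set ws. bil w w \<noteq> 0" "realext f = refl_prod ws" "(\<Prod>w\<leftarrow>ws. - bil w w / 2) > 0"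
    and vs: "\<forall>w\<in>set vs. bil w w \<noteq> 0" "realext g = refl_prod vs" "(\<Prod>w\<leftarrow>vs. - bil w w / 2) > 0"
    using assms(2,3) unfolding spinor_norm_one_iff by blast
  show ?thesis
    unfolding spinor_norm_one_iff
    using ws vs by (intro exI[of _ "ws @ vs"]) (auto simp: realext_comp[OF assms(1)] refl_prod_append)
qed

lemma spinor_norm_one_inverse:
  assumes "Modules.additive g" "g \<circ> h = id" "spinor_norm_one g"
  shows "spinor_norm_one h"
proof -
  obtain ws where ws: "\<forall>w\<in>set ws. bil w w \<noteq> 0" "realext g = refl_prod ws" "(\<Prod>w\<leftarrow>ws. - bil w w / 2) > 0"
    using assms(3) unfolding spinor_norm_one_iff by blast
  have "realext h = refl_prod (rev ws) \<circ> (realext g \<circ> realext h)"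
    by (simp add: ws(2) refl_prod_rev[OF ws(1)] o_assoc)
  also have "\<dots> = refl_prod (rev ws)"
    by (simp add: realext_comp[OF assms(1), symmetric] assms(2) realext_id)
  finally have "realext h = refl_prod (rev ws)" .
  moreover have "(\<Prod>w\<leftarrow>rev ws. - bil w w / 2) = (\<Prod>w\<leftarrow>ws. - bil w w / 2)"
    by (simp add: rev_map[symmetric] prod_list.rev)
  ultimately show ?thesis
    unfolding spinor_norm_one_iff using ws by (intro exI[of _ "rev ws"]) simp
qed

lemma O_L1_additive: "g \<in> O_L1 \<Longrightarrow> Modules.additive g"
  by (simp add: O_L1_def Modules.additive_def)

lemma O_L1_bij: "g \<in> O_L1 \<Longrightarrow> bij g"
  by (simp add: O_L1_def)

lemma O_L1_bil: "g \<in> O_L1 \<Longrightarrow> bil (g x) (g y) = bil x y"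
  by (simp add: O_L1_def)

lemma O_L1_id: "id \<in> O_L1"
  by (simp add: O_L1_def)

lemma O_L1_comp: "f \<in> O_L1 \<Longrightarrow> g \<in> O_L1 \<Longrightarrow> f \<circ> g \<in> O_L1"
  by (simp add: O_L1_def bij_comp)

lemma O_L1_inv:
  assumes "g \<in> O_L1"
  shows "inv g \<in> O_L1"
proof -
  have bij: "bij g" using assms by (rule O_L1_bij)
  then have g_inv: "g (inv g x) = x" for x by (simp add: bij_is_surj surj_f_inv_f)
  have "inv g (x + y) = inv g x + inv g y" for x y
    using bij_is_inj[OF bij] g_inv additive.add[OF O_L1_additive[OF assms]] by (metis injD)
  moreover have "bil (inv g x) (inv g y) = bil x y" for x y
    using O_L1_bil[OF assms, of "inv g x" "inv g y"] by (simp add: g_inv)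
  ultimately show ?thesis using bij by (simp add: O_L1_def bij_imp_bij_inv)
qed

lemma O_L1_involution:
  assumes "\<And>x. g (g x) = x" "\<And>x y. g (x + y) = g x + g y" "\<And>x y. bil (g x) (g y) = bil x y"
  shows "g \<in> O_L1"
proof -
  have "bij g" by (rule o_bij[of g]) (simp_all add: fun_eq_iff assms(1))
  then show ?thesis using assms by (simp add: O_L1_def)
qed

lemma O_plus_L1_subset_O_L1: "O_plus_L1 \<subseteq> O_L1"
  by (auto simp: O_plus_L1_def)

lemma O_plus_L1_id: "id \<in> O_plus_L1"
  by (simp add: O_plus_L1_def O_L1_id spinor_norm_one_iff realext_id exI[of _ "[]"])

lemma O_plus_L1_comp: "f \<in> O_plus_L1 \<Longrightarrow> g \<in> O_plus_L1 \<Longrightarrow> f \<circ> g \<in> O_plus_L1"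
  by (simp add: O_plus_L1_def O_L1_comp spinor_norm_one_comp O_L1_additive)

lemma O_plus_L1_inv:
  assumes "g \<in> O_plus_L1"
  shows "inv g \<in> O_plus_L1"
proof -
  have g: "g \<in> O_L1" "spinor_norm_one g" using assms by (simp_all add: O_plus_L1_def)
  have "g \<circ> inv g = id" using O_L1_bij[OF g(1)] by (meson bij_is_surj surj_iff)
  then show ?thesis
    using g O_L1_inv spinor_norm_one_inverse O_L1_additive by (auto simp: O_plus_L1_def)
qed

lemma gen_group_subset:
  assumes "S \<subseteq> G" "id \<in> G" "\<And>f g. f \<in> G \<Longrightarrow> g \<in> G \<Longrightarrow> f \<circ> g \<in> G" "\<And>f. f \<in> G \<Longrightarrow> inv f \<in> G"
  shows "gen_group S \<subseteq> G"
proof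
  show "f \<in> G" if "f \<in> gen_group S" for f
    using that by induction (use assms in blast)+
qed

lemma gen_group_mono: "S \<subseteq> T \<Longrightarrow> gen_group S \<subseteq> gen_group T"
  by (rule gen_group_subset) (auto intro: gen_group.intros)

lemma refl_int_root:
  assumes "bil w w = -2"
  shows "refl_int w x = x + bil x w *s w"
  by (simp add: refl_int_def assms vec_eq_iff)

lemma refl_int_root_in_O_L1:
  assumes "bil w w = -2"
  shows "refl_int w \<in> O_L1"
proof (rule O_L1_involution)
  show "refl_int w (refl_int w x) = x" for x
    by (simp add: refl_int_root[OF assms] bil_linear assms vec_eq_iff)
  show "refl_int w (x + y) = refl_int w x + refl_int w y" for x y
    by (simp add: refl_int_root[OF assms] bil_linear vec_eq_iff algebra_simps)
  show "bil (refl_int w x) (refl_int w y) = bil x y" for x y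
    by (simp add: refl_int_root[OF assms] bil_linear assms bil_sym[of w y] algebra_simps)
qed

lemma realext_refl_int_root:
  assumes "bil w w = -2"
  shows "realext (refl_int w) = reflR (real_vec w)"
proof (rule realext_eq_linear[OF linear_reflR])
  fix i
  have "bil (real_vec w) (real_vec w) = -2" by (simp add: bil_real_vec assms)
  then show "reflR (real_vec w) (axis i 1) = real_vec (refl_int w (axis i 1))"
    by (simp add: reflR_def refl_int_root[OF assms] real_vec_add_scale real_vec_axis[symmetric] bil_real_vec)
qed

lemma refl_int_root_in_O_plus_L1:
  assumes "bil w w = -2"
  shows "refl_int w \<in> O_plus_L1"
  using assms
  by (simp add: O_plus_L1_def refl_int_root_in_O_L1 spinor_norm_one_reflR realext_refl_int_root bil_real_vec)

lemma swap_iso_in_O_L1: "swap_iso \<in> O_L1"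
  by (rule O_L1_involution) (simp_all add: swap_iso_def vec4_eq_iff bil_def algebra_simps)

lemma realext_swap_iso: "realext swap_iso = reflR (vec4 0 0 1 1)"
proof (rule realext_eq_linear[OF linear_reflR])
  fix i :: 4
  have "bil (vec4 0 0 1 1) (vec4 0 0 1 1) = (-6 :: real)" by (simp add: bil_def)
  then show "reflR (vec4 0 0 1 1) (axis i 1) = real_vec (swap_iso (axis i 1))"
    using exhaust_4[of i] by (auto simp: reflR_def vec4_eq_iff bil_def swap_iso_def axis_def)
qed

lemma swap_iso_in_O_plus_L1: "swap_iso \<in> O_plus_L1"
  by (simp add: O_plus_L1_def swap_iso_in_O_L1 spinor_norm_one_reflR realext_swap_iso bil_def)

lemma A2_form_nonneg:
  fixes a b :: "'a::linordered_idom"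
  shows "0 \<le> a * a + a * b + b * b"
proof -
  have "2 * (a * a + a * b + b * b) = (a + b) * (a + b) + a * a + b * b"
    by (simp add: algebra_simps)
  moreover have "0 \<le> (a + b) * (a + b) + a * a + b * b"
    by simp
  ultimately show ?thesis
    by (metis zero_le_double_add_iff_zero_le_single_add mult_2)
qed

lemma norm_pos_imp_coord12_pos:
  fixes x :: "'a::linordered_idom ^ 4"
  assumes "0 < bil x x"
  shows "0 < x$1 * x$2"
  using assms A2_form_nonneg[of "x$3" "x$4"] by (simp add: bil_self)

lemma bil_pos_of_same_sheet:
  fixes a b :: "'a::linordered_idom ^ 4"
  assumes a: "0 < bil a a" and b: "0 < bil b b" and sheet: "0 < a$1 * b$1"
  shows "0 < bil a b"
proof -
  define Qa where "Qa = a$3 * a$3 + a$3 * a$4 + a$4 * a$4"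
  define Qb where "Qb = b$3 * b$3 + b$3 * b$4 + b$4 * b$4"
  define B where "B = 2 * a$3 * b$3 + a$3 * b$4 + a$4 * b$3 + 2 * a$4 * b$4"
  define S where "S = a$1 * b$2 + a$2 * b$1"
  have bil_ab: "bil a b = S - B"
    by (simp add: bil_def S_def B_def algebra_simps)
  have Q: "0 \<le> Qa" "Qa < a$1 * a$2" "0 \<le> Qb" "Qb < b$1 * b$2"
    using a b A2_form_nonneg[of "a$3" "a$4"] A2_form_nonneg[of "b$3" "b$4"]
    by (simp_all add: Qa_def Qb_def bil_self)
  have "0 < (a$1 * b$1) * (b$1 * b$2)" "0 < (a$1 * b$1) * (a$1 * a$2)"
    using sheet norm_pos_imp_coord12_pos[OF a] norm_pos_imp_coord12_pos[OF b] by simp_all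
  then have "0 < b$1 * b$1 * (a$1 * b$2)" "0 < a$1 * a$1 * (a$2 * b$1)"
    by (simp_all add: algebra_simps)
  then have "0 < a$1 * b$2" "0 < a$2 * b$1"
    by (simp_all add: zero_less_mult_iff)
  then have S_pos: "0 < S" by (simp add: S_def)
  have "B\<^sup>2 + 3 * (a$3 * b$4 - a$4 * b$3)\<^sup>2 = 4 * (Qa * Qb)"
    by (simp add: B_def Qa_def Qb_def power2_eq_square algebra_simps)
  then have "B\<^sup>2 \<le> 4 * (Qa * Qb)"
    using zero_le_power2[of "a$3 * b$4 - a$4 * b$3"] by linarith
  also have "\<dots> < 4 * ((a$1 * a$2) * (b$1 * b$2))"
    using Q by (simp add: mult_strict_mono')
  also have "\<dots> \<le> S\<^sup>2"
  proof -
    have "S\<^sup>2 = 4 * ((a$1 * a$2) * (b$1 * b$2)) + (a$1 * b$2 - a$2 * b$1)\<^sup>2"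
      by (simp add: S_def power2_eq_square algebra_simps)
    then show ?thesis by simp
  qed
  finally have "\<bar>B\<bar> < S"
    using power2_less_imp_less[of "\<bar>B\<bar>" S] S_pos by simp
  then show ?thesis by (simp add: bil_ab)
qed

lemma bil_pos_iff_same_sheet:
  fixes a b :: "'a::linordered_idom ^ 4"
  assumes a: "0 < bil a a" and b: "0 < bil b b"
  shows "0 < bil a b \<longleftrightarrow> 0 < a$1 * b$1"
proof
  assume "0 < a$1 * b$1"
  then show "0 < bil a b" by (rule bil_pos_of_same_sheet[OF a b])
next
  assume ab: "0 < bil a b"
  show "0 < a$1 * b$1"
  proof (rule ccontr)
    assume "\<not> 0 < a$1 * b$1"
    moreover have "a$1 \<noteq> 0" "b$1 \<noteq> 0"
      using norm_pos_imp_coord12_pos[OF a] norm_pos_imp_coord12_pos[OF b] by auto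
    ultimately have "0 < a$1 * (- b)$1"
      by (simp add: linorder_not_less le_less)
    then have "0 < bil a (- b)"
      using b by (intro bil_pos_of_same_sheet[OF a]) (simp_all add: bil_minus_left bil_minus_right)
    then show False using ab by (simp add: bil_minus_right)
  qed
qed

lemma reverse_cauchy_schwarz:
  fixes x w :: "'a::linordered_field ^ 4"
  assumes w: "0 < bil w w"
  shows "bil x x * bil w w \<le> (bil x w)\<^sup>2"
proof (rule ccontr)
  assume "\<not> ?thesis"
  then have disc: "(bil x w)\<^sup>2 - bil x x * bil w w < 0" by simp
  have w1: "w$1 \<noteq> 0" using norm_pos_imp_coord12_pos[OF w] by auto
  define t where "t = - x$1 / w$1"
  define y where "y = x + t *s w"
  have "bil y y * bil w w = (bil w w * t + bil x w)\<^sup>2 - ((bil x w)\<^sup>2 - bil x x * bil w w)"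
    by (simp add: y_def bil_linear bil_sym[of w x] power2_eq_square algebra_simps)
  also have "\<dots> > 0" using disc zero_le_power2[of "bil w w * t + bil x w"] by linarith
  finally have "0 < bil y y" using w by (simp add: zero_less_mult_iff)
  moreover have "y$1 = 0" using w1 by (simp add: y_def t_def)
  ultimately show False using norm_pos_imp_coord12_pos[of y] by simp
qed

lemma sgn_reflR_first:
  assumes z: "0 < bil z z" and w: "bil w w \<noteq> 0"
  shows "sgn ((reflR w z)$1) = sgn (- bil w w / 2) * sgn (z$1)"
proof -
  let ?r = "reflR w z"
  have r: "0 < bil ?r ?r" using z by (simp add: bil_reflR[OF w])
  have z1: "z$1 \<noteq> 0" and r1: "?r$1 \<noteq> 0"
    using norm_pos_imp_coord12_pos[OF z] norm_pos_imp_coord12_pos[OF r] by auto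
  have bil_zr: "bil z ?r = bil z z - 2 * (bil z w)\<^sup>2 / bil w w"
    by (simp add: reflR_def bil_linear power2_eq_square)
  show ?thesis
  proof (cases "bil w w < 0")
    case True
    then have "2 * (bil z w)\<^sup>2 / bil w w \<le> 0"
      by (simp add: divide_nonneg_neg)
    then have "0 < bil z ?r"
      using z by (simp add: bil_zr)
    then have "0 < z$1 * ?r$1" using bil_pos_iff_same_sheet[OF z r] by simp
    then show ?thesis using True by (auto simp: zero_less_mult_iff)
  next
    case False
    then have ww: "0 < bil w w" using w by simp
    then have "bil z z \<le> (bil z w)\<^sup>2 / bil w w"
      using reverse_cauchy_schwarz[OF ww, of z] by (simp add: pos_le_divide_eq)
    then have "\<not> 0 < bil z ?r" using z by (simp add: bil_zr)
    then have "z$1 * ?r$1 < 0"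
      using bil_pos_iff_same_sheet[OF z r] z1 r1 by (simp add: linorder_not_less le_less)
    then show ?thesis using ww by (auto simp: mult_less_0_iff)
  qed
qed

lemma sgn_refl_prod_first:
  assumes "\<forall>w\<in>set ws. bil w w \<noteq> 0" "0 < bil x x"
  shows "sgn ((refl_prod ws x)$1) = sgn (\<Prod>w\<leftarrow>ws. - bil w w / 2) * sgn (x$1)"
  using assms(1)
proof (induction ws)
  case (Cons w ws)
  have "0 < bil (refl_prod ws x) (refl_prod ws x)"
    using Cons.prems assms(2) by (simp add: bil_refl_prod)
  then show ?case
    using Cons by (simp add: sgn_reflR_first sgn_mult)
qed simp

lemma O_plus_L1_preserves_sheet:
  assumes g: "g \<in> O_plus_L1" and x: "0 < bil x x" "0 < x$1"
  shows "0 < g x $ 1"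
proof -
  obtain ws where ws: "\<forall>w\<in>set ws. bil w w \<noteq> 0" "realext g = refl_prod ws"
      "0 < (\<Prod>w\<leftarrow>ws. - bil w w / 2)"
    using g by (auto simp: O_plus_L1_def spinor_norm_one_iff)
  have "Modules.additive g" using g by (simp add: O_plus_L1_def O_L1_additive)
  then have "refl_prod ws (real_vec x) = real_vec (g x)"
    by (simp add: ws(2)[symmetric] realext_real_vec)
  moreover have "0 < bil (real_vec x) (real_vec x)"
    using x by (simp add: bil_real_vec)
  ultimately have "sgn (real_of_int (g x $ 1)) = sgn (real_of_int (x$1))"
    using sgn_refl_prod_first[OF ws(1), of "real_vec x"] ws(3) by simp
  then show ?thesis using x(2) by (simp add: sgn_real_def split: if_splits)
qed

definition rho :: "int ^ 4" where
  "rho = vec4 3 4 1 (-1)"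

abbreviation simple_roots :: "(int ^ 4) set" where
  "simple_roots \<equiv> {v1, v2, v3, v4}"

lemma simple_roots_nth [simp]:
  "v1$1 = 1" "v1$2 = -1" "v1$3 = 0" "v1$4 = 0"
  "v2$1 = 0" "v2$2 = 0" "v2$3 = -1" "v2$4 = 0"
  "v3$1 = 0" "v3$2 = 0" "v3$3 = 0" "v3$4 = 1"
  "v4$1 = 0" "v4$2 = 1" "v4$3 = 1" "v4$4 = -1"
  "rho$1 = 3" "rho$2 = 4" "rho$3 = 1" "rho$4 = -1"
  by (simp_all add: v1_def v2_def v3_def v4_def rho_def)

lemma bil_simple_roots:
  "bil x v1 = x$2 - x$1" "bil x v2 = 2 * x$3 + x$4" "bil x v3 = - x$3 - 2 * x$4"
  "bil x v4 = x$1 - x$3 + x$4" "bil x rho = 4 * x$1 + 3 * x$2 - x$3 + x$4"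
  by (simp_all add: bil_def)

lemma gram_simple_roots:
  "bil v1 v1 = -2" "bil v1 v2 = 0" "bil v1 v3 = 0" "bil v1 v4 = 1"
  "bil v2 v1 = 0" "bil v2 v2 = -2" "bil v2 v3 = 1" "bil v2 v4 = 1"
  "bil v3 v1 = 0" "bil v3 v2 = 1" "bil v3 v3 = -2" "bil v3 v4 = 1"
  "bil v4 v1 = 1" "bil v4 v2 = 1" "bil v4 v3 = 1" "bil v4 v4 = -2"
  "bil v1 rho = 1" "bil v2 rho = 1" "bil v3 rho = 1" "bil v4 rho = 1" "bil rho rho = 22"
  by (simp_all add: bil_simple_roots)

lemma simple_root_norm: "v \<in> simple_roots \<Longrightarrow> bil v v = -2"
  using gram_simple_roots by auto

lemma abs_le_of_square_less:
  fixes x k :: int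
  assumes "x\<^sup>2 < (k + 1)\<^sup>2" "0 \<le> k"
  shows "\<bar>x\<bar> \<le> k"
  using power2_less_imp_less[of "\<bar>x\<bar>" "k + 1"] assms by simp

(* The form is negative definite on the orthogonal complement of rho, so (r, rho) \<in> {0, 1}
   confines a root r to a bounded region; the identity below is the completion of squares that
   makes this explicit. *)

lemma root_coords_bounded:
  fixes r1 r2 r3 r4 c :: int
  assumes N: "r1 * r2 - (r3 * r3 + r3 * r4 + r4 * r4) = -1" and L: "4 * r1 + 3 * r2 - r3 + r4 = c"
    and c: "c = 0 \<or> c = 1"
  shows "\<bar>r1\<bar> \<le> 1" "\<bar>r3\<bar> \<le> 1" "\<bar>r4\<bar> \<le> 1"
proof -
  define d where "d = r3 - r4"
  define s where "s = r3 + r4"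
  define u where "u = 8 * r1 - c - d"
  have "u\<^sup>2 + 12 * d\<^sup>2 + 36 * s\<^sup>2 - (c + d)\<^sup>2
        = -48 * (r1 * r2 - (r3 * r3 + r3 * r4 + r4 * r4)) + 16 * r1 * (4 * r1 + 3 * r2 - r3 + r4 - c)"
    by (simp add: u_def d_def s_def power2_eq_square algebra_simps)
  then have K: "u\<^sup>2 + 12 * d\<^sup>2 + 36 * s\<^sup>2 - (c + d)\<^sup>2 = 48"
    using N L by simp
  have "(c + d)\<^sup>2 \<le> 2 + 2 * d\<^sup>2"
    using c zero_le_power2[of "d - 1"] by (auto simp: power2_eq_square algebra_simps)
  moreover have "0 \<le> u\<^sup>2" "0 \<le> d\<^sup>2" "0 \<le> s\<^sup>2"
    by simp_all
  ultimately have "s\<^sup>2 < 4" "d\<^sup>2 < 9" "u\<^sup>2 < 64"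
    using K by linarith+
  then have "\<bar>s\<bar> \<le> 1" "\<bar>d\<bar> \<le> 2" "\<bar>u\<bar> \<le> 7"
    using abs_le_of_square_less[of s 1] abs_le_of_square_less[of d 2] abs_le_of_square_less[of u 7]
    by simp_all
  then show "\<bar>r1\<bar> \<le> 1" "\<bar>r3\<bar> \<le> 1" "\<bar>r4\<bar> \<le> 1"
    using c unfolding u_def d_def s_def abs_le_iff by arith+
qed

lemma root_coords_cases:
  fixes r1 r2 r3 r4 c :: int
  assumes N: "r1 * r2 - (r3 * r3 + r3 * r4 + r4 * r4) = -1" and L: "4 * r1 + 3 * r2 - r3 + r4 = c"
    and c: "c = 0 \<or> c = 1"
  shows "c = 1 \<and> (r1 = 1 \<and> r2 = -1 \<and> r3 = 0 \<and> r4 = 0 \<or> r1 = 0 \<and> r2 = 0 \<and> r3 = -1 \<and> r4 = 0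
      \<or> r1 = 0 \<and> r2 = 0 \<and> r3 = 0 \<and> r4 = 1 \<or> r1 = 0 \<and> r2 = 1 \<and> r3 = 1 \<and> r4 = -1)"
proof -
  have "r1 = -1 \<or> r1 = 0 \<or> r1 = 1" "r3 = -1 \<or> r3 = 0 \<or> r3 = 1" "r4 = -1 \<or> r4 = 0 \<or> r4 = 1"
    using root_coords_bounded[OF N L c] by auto
  moreover have "r2 = -2 \<or> r2 = -1 \<or> r2 = 0 \<or> r2 = 1 \<or> r2 = 2"
    using root_coords_bounded[OF N L c] c L by auto
  ultimately show ?thesis
    using c N L by (elim disjE) simp_all
qed

lemma root_rho_cases:
  assumes r: "bil r r = -2" and c: "bil r rho = 0 \<or> bil r rho = 1"
  shows "bil r rho = 1 \<and> r \<in> simple_roots"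
proof -
  have N: "r$1 * r$2 - (r$3 * r$3 + r$3 * r$4 + r$4 * r$4) = -1"
    using r by (simp add: bil_self)
  have L: "4 * r$1 + 3 * r$2 - r$3 + r$4 = bil r rho"
    by (simp add: bil_simple_roots)
  show ?thesis
    using root_coords_cases[OF N L c] by (auto simp: vec4_eq_iff)
qed

lemma root_bil_rho_neq_0: "bil r r = -2 \<Longrightarrow> bil r rho \<noteq> 0"
  using root_rho_cases by fastforce

lemma root_bil_rho_eq_1_imp_simple: "bil r r = -2 \<Longrightarrow> bil r rho = 1 \<Longrightarrow> r \<in> simple_roots"
  using root_rho_cases by blast

(* In terms of the slacks A, B, C, D of the four wall inequalities, (y, y) - 22 becomes a
   polynomial with nonnegative coefficients and no constant term. *)

lemma chamber_coords:
  fixes y1 y2 y3 y4 :: int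
  assumes N: "y1 * y2 - (y3 * y3 + y3 * y4 + y4 * y4) = 11"
    and walls: "1 \<le> y2 - y1" "1 \<le> 2 * y3 + y4" "1 \<le> - y3 - 2 * y4" "1 \<le> y1 - y3 + y4"
  shows "y1 = 3 \<and> y2 = 4 \<and> y3 = 1 \<and> y4 = -1"
proof -
  define A where "A = y2 - y1 - 1"
  define B where "B = 2 * y3 + y4 - 1"
  define C where "C = - y3 - 2 * y4 - 1"
  define D where "D = y1 - y3 + y4 - 1"
  have nonneg: "0 \<le> A" "0 \<le> B" "0 \<le> C" "0 \<le> D"
    using walls by (simp_all add: A_def B_def C_def D_def)
  have "0 = 18 * A + 36 * B + 36 * C + 42 * D + 4 * (B * B) + 10 * (B * C) + 4 * (C * C) + 6 * (D * D)
          + 12 * (B * D) + 12 * (C * D) + 6 * ((B + C + D) * A)"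
    using N by (simp add: A_def B_def C_def D_def algebra_simps)
  moreover have "0 \<le> B * B" "0 \<le> B * C" "0 \<le> C * C" "0 \<le> D * D" "0 \<le> B * D" "0 \<le> C * D"
      "0 \<le> (B + C + D) * A"
    using nonneg by simp_all
  ultimately have "A = 0" "B = 0" "C = 0" "D = 0"
    using nonneg by linarith+
  then show ?thesis by (simp add: A_def B_def C_def D_def)
qed

lemma chamber_eq_rho:
  assumes "bil y y = 22" "\<forall>v\<in>simple_roots. 1 \<le> bil y v"
  shows "y = rho"
proof -
  have "y$1 * y$2 - (y$3 * y$3 + y$3 * y$4 + y$4 * y$4) = 11"
    using assms(1) by (simp add: bil_self)
  then show ?thesis
    using chamber_coords[of "y$1" "y$2" "y$3" "y$4"] assms(2) by (simp add: bil_simple_roots vec4_eq_iff)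
qed

lemma bil_orbit_rho_simple_root_neq_0:
  assumes h: "h \<in> O_L1" and v: "v \<in> simple_roots"
  shows "bil (h rho) v \<noteq> 0"
proof -
  have h_inv: "h (inv h v) = v"
    using O_L1_bij[OF h] by (simp add: bij_is_surj surj_f_inv_f)
  then have "bil (inv h v) (inv h v) = -2"
    using O_L1_bil[OF h, of "inv h v" "inv h v"] simple_root_norm[OF v] by simp
  moreover have "bil (h rho) v = bil (inv h v) rho"
    using O_L1_bil[OF h, of rho "inv h v"] h_inv by (simp add: bil_sym)
  ultimately show ?thesis using root_bil_rho_neq_0 by simp
qed

lemma bil_orbit_rho_pos:
  assumes "h \<in> O_L1" "0 < h rho $ 1"
  shows "0 < bil (h rho) rho"
  using assms bil_pos_iff_same_sheet[of "h rho" rho] by (simp add: O_L1_bil gram_simple_roots)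

abbreviation weyl_group :: "(int ^ 4 \<Rightarrow> int ^ 4) set" where
  "weyl_group \<equiv> gen_group (refl_int ` simple_roots)"

lemma orbit_rho_descent:
  assumes h: "h \<in> O_L1" "0 < h rho $ 1" and v: "v \<in> simple_roots" "bil (h rho) v < 0"
  shows "refl_int v \<circ> h \<in> O_L1" "0 < (refl_int v \<circ> h) rho $ 1"
    "bil ((refl_int v \<circ> h) rho) rho < bil (h rho) rho"
proof -
  let ?y = "h rho" and ?y' = "(refl_int v \<circ> h) rho"
  have v_norm: "bil v v = -2" using v(1) by (rule simple_root_norm)
  show h': "refl_int v \<circ> h \<in> O_L1"
    using refl_int_root_in_O_L1[OF v_norm] h(1) by (rule O_L1_comp)
  have y': "?y' = ?y + bil ?y v *s v"
    by (simp add: refl_int_root[OF v_norm])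
  have norms: "bil ?y ?y = 22" "bil ?y' ?y' = 22"
    using h(1) h' by (simp_all only: O_L1_bil gram_simple_roots)
  have "0 < bil ?y ?y'"
    unfolding y' using norms(1) by (simp add: bil_linear add_pos_nonneg)
  then have "0 < ?y $ 1 * ?y' $ 1"
    using bil_pos_iff_same_sheet[of ?y ?y'] norms by simp
  then show "0 < ?y' $ 1"
    using h(2) by (simp add: zero_less_mult_iff)
  have "bil v rho = 1"
    using v(1) gram_simple_roots by auto
  then show "bil ?y' rho < bil ?y rho"
    unfolding y' using v(2) by (simp add: bil_linear)
qed

lemma orbit_rho_reduction:
  assumes "h \<in> O_L1" "0 < h rho $ 1"
  shows "\<exists>w\<in>weyl_group. w (h rho) = rho"
  using assms
proof (induction "nat (bil (h rho) rho)" arbitrary: h rule: less_induct)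
  case less
  show ?case
  proof (cases "\<forall>v\<in>simple_roots. 1 \<le> bil (h rho) v")
    case True
    have "bil (h rho) (h rho) = 22"
      using less.prems(1) by (simp only: O_L1_bil gram_simple_roots)
    then have "h rho = rho"
      using True by (rule chamber_eq_rho)
    then show ?thesis
      using gen_id by (intro bexI[of _ id]) simp_all
  next
    case False
    then obtain v where "v \<in> simple_roots" "bil (h rho) v < 1"
      by (auto simp: not_le)
    then have v: "v \<in> simple_roots" "bil (h rho) v < 0"
      using bil_orbit_rho_simple_root_neq_0[OF less.prems(1)] by fastforce+
    note descent = orbit_rho_descent[OF less.prems v]
    have "nat (bil ((refl_int v \<circ> h) rho) rho) < nat (bil (h rho) rho)"
      using descent(3) bil_orbit_rho_pos[OF descent(1,2)] by simp
    then obtain w where w: "w \<in> weyl_group" "w ((refl_int v \<circ> h) rho) = rho"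
      using less.hyps descent(1,2) by blast
    have "refl_int v \<in> weyl_group"
      using v(1) by (intro gen_base imageI)
    then have "w \<circ> refl_int v \<in> weyl_group"
      using w(1) by (rule gen_comp[rotated])
    then show ?thesis
      using w(2) by (intro bexI[of _ "w \<circ> refl_int v"]) simp_all
  qed
qed

lemma simple_roots_expansion:
  "x = x$1 *s v1 + (x$1 + x$2 - x$3) *s v2 + (x$1 + x$2 + x$4) *s v3 + (x$1 + x$2) *s v4"
  by (simp add: vec4_eq_iff algebra_simps)

lemma additive_eqI_simple_roots:
  fixes f g :: "int ^ 4 \<Rightarrow> int ^ 4"
  assumes "Modules.additive f" "Modules.additive g" "\<forall>v\<in>simple_roots. f v = g v"
  shows "f = g"
proof
  fix x :: "int ^ 4"
  let ?e = "x$1 *s v1 + (x$1 + x$2 - x$3) *s v2 + (x$1 + x$2 + x$4) *s v3 + (x$1 + x$2) *s v4"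
  have "f ?e = g ?e"
    using assms(3)
    by (simp only: additive.add[OF assms(1)] additive.add[OF assms(2)] additive_scale_int[OF assms(1)]
        additive_scale_int[OF assms(2)] insert_iff simp_thms)
  then show "f x = g x"
    by (simp only: simple_roots_expansion[symmetric])
qed

lemma stabilizer_rho:
  assumes h: "h \<in> O_L1" and fix_rho: "h rho = rho"
  shows "h = id \<or> h = swap_iso"
proof -
  have simple: "h v \<in> simple_roots" if "v \<in> simple_roots" for v
    using that O_L1_bil[OF h, of v] O_L1_bil[OF h, of v rho] fix_rho
    by (intro root_bil_rho_eq_1_imp_simple) (auto simp: gram_simple_roots)
  have "h v1 = v1 \<and> h v2 = v2 \<and> h v3 = v3 \<and> h v4 = v4 \<or> h v1 = v1 \<and> h v2 = v3 \<and> h v3 = v2 \<and> h v4 = v4"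
  proof -
    have "h v1 \<in> simple_roots" "h v2 \<in> simple_roots" "h v3 \<in> simple_roots" "h v4 \<in> simple_roots"
      by (rule simple; simp)+
    moreover have "bil (h v1) (h v2) = 0" "bil (h v1) (h v3) = 0" "bil (h v1) (h v4) = 1"
        "bil (h v2) (h v3) = 1" "bil (h v2) (h v4) = 1" "bil (h v3) (h v4) = 1"
      by (simp_all add: O_L1_bil[OF h] gram_simple_roots)
    ultimately show ?thesis
      by (elim insertE emptyE) (simp_all add: gram_simple_roots)
  qed
  moreover have "swap_iso v1 = v1" "swap_iso v2 = v3" "swap_iso v3 = v2" "swap_iso v4 = v4"
    by (simp_all add: swap_iso_def vec4_eq_iff)
  ultimately have "(\<forall>v\<in>simple_roots. h v = id v) \<or> (\<forall>v\<in>simple_roots. h v = swap_iso v)"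
    by auto
  then show ?thesis
    using additive_eqI_simple_roots[OF O_L1_additive[OF h] O_L1_additive] O_L1_id swap_iso_in_O_L1
    by blast
qed

theorem mainTheorem5:
  shows "O_plus_L1 = gen_group {refl_int v1, refl_int v2, refl_int v3, refl_int v4, swap_iso}"
  (is "_ = gen_group ?S")
proof
  show gens: "gen_group ?S \<subseteq> O_plus_L1"
    by (rule gen_group_subset)
      (simp_all add: O_plus_L1_id O_plus_L1_comp O_plus_L1_inv refl_int_root_in_O_plus_L1
        swap_iso_in_O_plus_L1 gram_simple_roots)
  show "O_plus_L1 \<subseteq> gen_group ?S"
  proof
    fix g assume g: "g \<in> O_plus_L1"
    then have g_O: "g \<in> O_L1" using O_plus_L1_subset_O_L1 by blast
    have "0 < g rho $ 1"
      using O_plus_L1_preserves_sheet[OF g] by (simp add: gram_simple_roots)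
    then obtain w where "w \<in> weyl_group" and w_rho: "w (g rho) = rho"
      using orbit_rho_reduction[OF g_O] by blast
    then have w: "w \<in> gen_group ?S"
      using gen_group_mono[of "refl_int ` simple_roots" ?S] by blast
    then have "w \<circ> g \<in> O_L1"
      using gens O_plus_L1_subset_O_L1 g_O by (blast intro: O_L1_comp)
    then have "w \<circ> g = id \<or> w \<circ> g = swap_iso"
      using w_rho by (intro stabilizer_rho) simp_all
    then have "w \<circ> g \<in> gen_group ?S"
      by (auto intro: gen_id gen_base)
    then have "inv w \<circ> (w \<circ> g) \<in> gen_group ?S"
      using w by (blast intro: gen_comp gen_inv)
    moreover have "inj w"
      using w gens O_plus_L1_subset_O_L1 O_L1_bij bij_is_inj by blast
    then have "inv w \<circ> (w \<circ> g) = g"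
      by (simp add: o_assoc)
    ultimately show "g \<in> gen_group ?S" by simp
  qed
qed

end
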